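(* Let $V$ be a finite set of variables, let $(\mathit{base}, \mathit{stay}, \mathit{step}, \mathit{conc})$ be a generalized acceleration lemma (GAL) over $V$, and let $\mathit{inv}$ be a first-order formula with free variables in $V$. Let $\mathit{inv}' := \mathit{inv}[V \mapsto V']$. Then $(\mathit{base} \land \mathit{inv},\ \mathit{stay} \land \mathit{inv}',\ \mathit{step} \land \mathit{inv}',\ \mathit{conc} \land \mathit{inv})$ is also a GAL over $V$.
   Context: Fix a first-order theory $T$. For a set of variables $X$, $\mathcal{A}(X)$ denotes the set of assignments $\nu: X \to \mathcal{V}$ (values). $X' = \{x' \mid x \in X\}$ is a disjoint primed copy of $X$; for $\nu \in \mathcal{A}(X)$, $\nu' \in \mathcal{A}(X')$ is given by $\nu'(x') = \nu(x)$; for $\nu_1,\nu_2 \in \mathcal{A}(X)$, $\langle \nu_1,\nu_2\rangle := \nu_1 \uplus \nu_2'$. $\nu \models_T \alpha$ denotes entailment in $T$. For a formula $\alpha$, $\alpha[V\mapsto V']$ is the result of replacing each $v\in V$ simultaneously by $v'$. A generalized acceleration lemma (GAL) over $V$ is a tuple $(\mathit{base}, \mathit{stay}, \mathit{step}, \mathit{conc})$ of first-order formulas with $\mathit{base}, \mathit{conc}$ having free variables in $V$ and $\mathit{stay}, \mathit{step}$ having free variables in $V \cup V'$, such that: (I) for every sequence $\alpha \in \mathcal{A}(V)^\omega$ with $\alpha[0] \models_T \mathit{conc}$, if (a) for all $i$, $\langle\alpha[i],\alpha[i+1]\rangle \models_T \mathit{step} \lor \mathit{stay}$, and (b) for all $i$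 there is $j \ge i$ with $\langle\alpha[j],\alpha[j+1]\rangle \models_T \mathit{step}$, then there is $k$ with $\alpha[k] \models_T \mathit{base}$; and (II) for all $\nu,\nu' \in \mathcal{A}(V)$ with $\nu \models_T \mathit{conc}$ and $\langle \nu,\nu'\rangle \models_T \mathit{step}\lor\mathit{stay}$, we have $\nu' \models_T \mathit{conc}$. *)

theory Defs
  imports Main
begin

text \<open>Free variables are of type 'x; bound variables are de Bruijn indices, so that
  renaming free variables is automatically capture-free.\<close>

datatype ('f, 'x) trm = Var 'x | Bnd nat | Fn 'f "('f, 'x) trm list"

datatype ('f, 'p, 'x) fm =
    FF
  | Atom 'p "('f, 'x) trm list"
  | Eq "('f, 'x) trm" "('f, 'x) trm"
  | Neg "('f, 'p, 'x) fm"
  | And "('f, 'p, 'x) fm" "('f, 'p, 'x) fm"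
  | Or "('f, 'p, 'x) fm" "('f, 'p, 'x) fm"
  | Ex "('f, 'p, 'x) fm"
  | All "('f, 'p, 'x) fm"

text \<open>A structure with carrier UNIV :: 'val (the values).\<close>
record ('f, 'p, 'val) struc =
  fn_interp :: "'f \<Rightarrow> 'val list \<Rightarrow> 'val"
  pred_interp :: "'p \<Rightarrow> 'val list \<Rightarrow> bool"

fun eval_trm :: "('f, 'p, 'val) struc \<Rightarrow> ('x \<Rightarrow> 'val) \<Rightarrow> (nat \<Rightarrow> 'val) \<Rightarrow> ('f, 'x) trm \<Rightarrow> 'val" where
  "eval_trm S e b (Var x) = e x"
| "eval_trm S e b (Bnd n) = b n"
| "eval_trm S e b (Fn f ts) = fn_interp S f (map (eval_trm S e b) ts)"

definition push :: "'val \<Rightarrow> (nat \<Rightarrow> 'val) \<Rightarrow> nat \<Rightarrow> 'val" where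
  "push a b = (\<lambda>n. if n = 0 then a else b (n - 1))"

fun sat :: "('f, 'p, 'val) struc \<Rightarrow> ('x \<Rightarrow> 'val) \<Rightarrow> (nat \<Rightarrow> 'val) \<Rightarrow> ('f, 'p, 'x) fm \<Rightarrow> bool" where
  "sat S e b FF = False"
| "sat S e b (Atom p ts) = pred_interp S p (map (eval_trm S e b) ts)"
| "sat S e b (Eq t u) = (eval_trm S e b t = eval_trm S e b u)"
| "sat S e b (Neg \<phi>) = (\<not> sat S e b \<phi>)"
| "sat S e b (And \<phi> \<psi>) = (sat S e b \<phi> \<and> sat S e b \<psi>)"
| "sat S e b (Or \<phi> \<psi>) = (sat S e b \<phi> \<or> sat S e b \<psi>)"
| "sat S e b (Ex \<phi>) = (\<exists>a. sat S e (push a b) \<phi>)"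
| "sat S e b (All \<phi>) = (\<forall>a. sat S e (push a b) \<phi>)"

abbreviation fvars :: "('f, 'p, 'x) fm \<Rightarrow> 'x set" where
  "fvars \<equiv> set3_fm"

definition is_model :: "('f, 'p, 'x) fm set \<Rightarrow> ('f, 'p, 'val) struc \<Rightarrow> bool" where
  "is_model T S = (\<forall>\<phi>\<in>T. \<forall>e b. sat S e b \<phi>)"

definition entails :: "('f, 'p, 'x) fm set \<Rightarrow> ('x \<Rightarrow> 'val) \<Rightarrow> ('f, 'p, 'x) fm \<Rightarrow> bool" where
  "entails T e \<phi> = (\<forall>S b. is_model T S \<longrightarrow> sat S e b \<phi>)"

datatype 'v pvar = Unp 'v | Prm 'v

text \<open>\<nu> \<in> A(V) seen as an environment for formulas over V (primed variables irrelevant).\<close>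
definition env1 :: "('v \<Rightarrow> 'val) \<Rightarrow> 'v pvar \<Rightarrow> 'val" where
  "env1 \<nu> = (\<lambda>x. case x of Unp v \<Rightarrow> \<nu> v | Prm v \<Rightarrow> undefined)"

text \<open>\<langle>\<nu>1,\<nu>2\<rangle> = \<nu>1 \<uplus> \<nu>2'.\<close>
definition env2 :: "('v \<Rightarrow> 'val) \<Rightarrow> ('v \<Rightarrow> 'val) \<Rightarrow> 'v pvar \<Rightarrow> 'val" where
  "env2 \<nu>1 \<nu>2 = (\<lambda>x. case x of Unp v \<Rightarrow> \<nu>1 v | Prm v \<Rightarrow> \<nu>2 v)"

definition prime_fm :: "'v set \<Rightarrow> ('f, 'p, 'v pvar) fm \<Rightarrow> ('f, 'p, 'v pvar) fm" where
  "prime_fm V \<phi> = map_fm id id (\<lambda>x. case x of Unp v \<Rightarrow> (if v \<in> V then Prm v else Unp v) | Prm v \<Rightarrow> Prm v) \<phi>"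

definition is_GAL :: "('f, 'p, 'v pvar) fm set \<Rightarrow> 'v set \<Rightarrow>
    ('f, 'p, 'v pvar) fm \<Rightarrow> ('f, 'p, 'v pvar) fm \<Rightarrow> ('f, 'p, 'v pvar) fm \<Rightarrow> ('f, 'p, 'v pvar) fm \<Rightarrow>
    ('val itself) \<Rightarrow> bool" where
  "is_GAL T V base stay step conc (_ :: 'val itself) \<longleftrightarrow>
     fvars base \<subseteq> Unp ` V \<and> fvars conc \<subseteq> Unp ` V \<and>
     fvars stay \<subseteq> Unp ` V \<union> Prm ` V \<and> fvars step \<subseteq> Unp ` V \<union> Prm ` V \<and>
     (\<forall>\<alpha> :: nat \<Rightarrow> 'v \<Rightarrow> 'val.
        entails T (env1 (\<alpha> 0)) conc \<longrightarrow>
        (\<forall>i. entails T (env2 (\<alpha> i) (\<alpha> (Suc i))) (Or step stay)) \<longrightarrow>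
        (\<forall>i. \<exists>j\<ge>i. entails T (env2 (\<alpha> j) (\<alpha> (Suc j))) step) \<longrightarrow>
        (\<exists>k. entails T (env1 (\<alpha> k)) base)) \<and>
     (\<forall>\<nu> \<nu>' :: 'v \<Rightarrow> 'val.
        entails T (env1 \<nu>) conc \<longrightarrow> entails T (env2 \<nu> \<nu>') (Or step stay) \<longrightarrow>
        entails T (env1 \<nu>') conc)"

end

theory Submission
  imports Defs
begin

text \<open>Conjoining the invariant to every component preserves both GAL conditions: a run of the
  strengthened transition relation is a run of the original one, so it reaches base, and the
  primed copy of inv in every transition makes inv hold in every state after the first, while
  the strengthened conc provides it in the first.\<close>

lemma eval_trm_cong:
  "(\<And>x. x \<in> set2_trm t \<Longrightarrow> e x = e' x) \<Longrightarrow> eval_trm S e b t = eval_trm S e' b t"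
proof (induction t)
  case (Fn f ts)
  then have "map (eval_trm S e b) ts = map (eval_trm S e' b) ts"
    by (auto intro!: map_cong)
  then show ?case
    by (simp only: eval_trm.simps)
qed auto

lemma sat_cong:
  "(\<And>x. x \<in> fvars \<phi> \<Longrightarrow> e x = e' x) \<Longrightarrow> sat S e b \<phi> = sat S e' b \<phi>"
proof (induction \<phi> arbitrary: b)
  case (Atom p ts)
  then show ?case
    by (auto intro!: arg_cong[where f = "pred_interp S p"] map_cong eval_trm_cong)
next
  case (Eq t u)
  then show ?case
    using eval_trm_cong[of t e e' S b] eval_trm_cong[of u e e' S b] by auto
qed auto

lemma eval_trm_map_trm:
  "eval_trm S e b (map_trm id g t) = eval_trm S (e \<circ> g) b t"
proof (induction t)
  case (Fn f ts)
  have "map (eval_trm S e b \<circ> map_trm (\<lambda>a. a) g) ts = map (eval_trm S (e \<circ> g) b) ts"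
    using Fn by (intro map_cong) (simp_all add: id_def comp_def)
  then show ?case
    by (simp only: eval_trm.simps trm.map map_map id_apply)
qed auto

lemma sat_map_fm:
  "sat S e b (map_fm id id g \<phi>) = sat S (e \<circ> g) b \<phi>"
  by (induction \<phi> arbitrary: b) (auto simp: eval_trm_map_trm comp_def)

lemma fvars_prime_fm:
  assumes "fvars \<phi> \<subseteq> Unp ` V"
  shows "fvars (prime_fm V \<phi>) \<subseteq> Prm ` V"
  using assms by (auto simp: prime_fm_def fm.set_map)

lemma sat_prime_fm:
  assumes "fvars \<phi> \<subseteq> Unp ` V"
  shows "sat S (env2 \<nu> \<nu>') b (prime_fm V \<phi>) = sat S (env1 \<nu>') b \<phi>"
  unfolding prime_fm_def sat_map_fm
  by (rule sat_cong) (use assms in \<open>auto simp: env1_def env2_def\<close>)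

lemma entails_prime_fm:
  assumes "fvars \<phi> \<subseteq> Unp ` V"
  shows "entails T (env2 \<nu> \<nu>') (prime_fm V \<phi>) = entails T (env1 \<nu>') \<phi>"
  unfolding entails_def sat_prime_fm[OF assms] ..

lemma entails_And:
  "entails T e (And \<phi> \<psi>) = (entails T e \<phi> \<and> entails T e \<psi>)"
  unfolding entails_def by auto

lemma entails_Or_And_right:
  "entails T e (Or (And \<phi> \<chi>) (And \<psi> \<chi>)) = (entails T e (Or \<phi> \<psi>) \<and> entails T e \<chi>)"
  unfolding entails_def by auto

theorem lemma4:
  fixes T :: "('f, 'p, 'v pvar) fm set" and V :: "'v set"
    and base stay step conc inv :: "('f, 'p, 'v pvar) fm"
  assumes "finite V"
    and "is_GAL T V base stay step conc TYPE('val)"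
    and "fvars inv \<subseteq> Unp ` V"
  shows "is_GAL T V (And base inv) (And stay (prime_fm V inv)) (And step (prime_fm V inv))
           (And conc inv) TYPE('val)"
proof -
  note GAL = assms(2)[unfolded is_GAL_def]
  note transition = entails_Or_And_right entails_prime_fm[OF assms(3)]
  have "\<exists>k. entails T (env1 (\<alpha> k)) (And base inv)"
    if start: "entails T (env1 (\<alpha> 0)) (And conc inv)"
      and run: "\<forall>i. entails T (env2 (\<alpha> i) (\<alpha> (Suc i)))
                  (Or (And step (prime_fm V inv)) (And stay (prime_fm V inv)))"
      and fair: "\<forall>i. \<exists>j\<ge>i. entails T (env2 (\<alpha> j) (\<alpha> (Suc j))) (And step (prime_fm V inv))"
    for \<alpha> :: "nat \<Rightarrow> 'v \<Rightarrow> 'val"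
  proof -
    have inv_everywhere: "entails T (env1 (\<alpha> k)) inv" for k
    proof (cases k)
      case (Suc i)
      then show ?thesis
        using run[rule_format, of i] by (simp add: transition)
    qed (use start entails_And in blast)
    obtain k where "entails T (env1 (\<alpha> k)) base"
      using GAL start run fair transition by (metis entails_And)
    then show ?thesis
      using inv_everywhere entails_And by blast
  qed
  moreover have "fvars (prime_fm V inv) \<subseteq> Unp ` V \<union> Prm ` V"
    using fvars_prime_fm[OF assms(3)] by blast
  ultimately show ?thesis
    using GAL assms(3) unfolding is_GAL_def by (auto simp: entails_And transition)
qed

end
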